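(* Let $\mathcal{X}\in\mathbb{R}^{n_1\times n_2\times n_3}$, let $q\in\mathbb{N}$, and let $\mathcal{B}\in\mathbb{R}^{n_2\times s\times n_3}$ (in the algorithm, a Gaussian random tensor). Form $$\mathcal{K}=[\mathcal{X}*\mathcal{B},\ (\mathcal{X}*\mathcal{X}^\top)*\mathcal{X}*\mathcal{B},\ \ldots,\ (\mathcal{X}*\mathcal{X}^\top)^{q}*\mathcal{X}*\mathcal{B}]$$ and let $\mathcal{Q}\in\mathbb{R}^{n_1\times m\times n_3}$ be the orthonormal factor of a T-QR factorization $\mathcal{K}=\mathcal{Q}*\mathcal{R}$, so that $\mathcal{Q}^\top*\mathcal{Q}=\mathcal{I}$. Put $\mathcal{P}_k=\mathcal{Q}*\mathcal{Q}^\top$ and $$\mathcal{Z}=[\mathcal{X},\ (\mathcal{X}*\mathcal{X}^\top)*\mathcal{X},\ \ldots,\ (\mathcal{X}*\mathcal{X}^\top)^{q}*\mathcal{X}]\in\mathbb{R}^{n_1\times n_2(q+1)\times n_3}.$$ Then $$\|(\mathcal{I}-\mathcal{Q}*\mathcal{Q}^\top)*\mathcal{X}\|_2\le \|(\mathcal{I}-\mathcal{P}_k)*\mathcal{Z}\|_2^{\frac{1}{2q+1}}.$$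
   Context: For a real third-order tensor $\mathcal{X}\in\mathbb{R}^{n_1\times n_2\times n_3}$ let $X^{(1)},\dots,X^{(n_3)}$ be its frontal slices ($X^{(k)}=\mathcal{X}(:,:,k)$). - $\mathtt{bcirc}(\mathcal{X})\in\mathbb{R}^{n_1n_3\times n_2n_3}$ is the block circulant matrix whose first block column is $X^{(1)},X^{(2)},\dots,X^{(n_3)}$, each subsequent block column being the cyclic downward shift of the previous one. - $\mathtt{unfold}(\mathcal{X})$ stacks the frontal slices vertically into an $n_1n_3\times n_2$ matrix, and $\mathtt{fold}$ is its inverse. - The T-product of $\mathcal{X}\in\mathbb{R}^{n_1\times n_2\times n_3}$ and $\mathcal{Y}\in\mathbb{R}^{n_2\times n_4\times n_3}$ is $\mathcal{X}*\mathcal{Y}=\mathtt{fold}(\mathtt{bcirc}(\mathcal{X})\,\mathtt{unfold}(\mathcal{Y}))\in\mathbb{R}^{n_1\times n_4\times n_3}$. - The transpose $\mathcal{X}^\top\in\mathbb{R}^{n_2\times n_1\times n_3}$ has frontal slices $(X^{(1)})^\top$ and, for $k=2,\dots,n_3$, $\mathcal{X}^\top(:,:,k)=(X^{(n_3+2-k)})^\top$. - The identity tensor $\mathcal{I}$ (of size $n\times n\times n_3$) has first frontal slice $I_n$ and all other frontal slices zero. Powers are $\mathcal{A}^j=\mathcal{A}*\cdots*\mathcal{A}$ ($j$ factors), with $\mathcal{A}^0=\mathcal{I}$. - The spectral norm is $\|\mathcal{X}\|_2=\|\mathtt{bcirc}(\mathcal{X})\|_2$. - $[\mathcal{A}_1,\ldots,\mathcal{A}_r]$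 denotes concatenation along the second mode: tensors with the same first and third dimensions have their frontal slices concatenated horizontally. - A T-QR factorization of $\mathcal{K}$ is computed by applying the fast Fourier transform along the third mode, taking a QR factorization of each frontal slice, and transforming back. It yields $\mathcal{K}=\mathcal{Q}*\mathcal{R}$ with $\mathcal{Q}^\top*\mathcal{Q}=\mathcal{I}$ and $\mathcal{R}$ having upper triangular frontal slices. *)

theory Defs
  imports "HOL-Analysis.Analysis"
begin

text \<open>Third-order real tensors are represented as functions of three 0-based indices
  (row i, column j, frontal slice k); their dimensions are carried explicitly.  Only entries within the index
  ranges are meaningful.\<close>

type_synonym tensor = "nat \<Rightarrow> nat \<Rightarrow> nat \<Rightarrow> real"
type_synonym rmat = "nat \<Rightarrow> nat \<Rightarrow> real"

text \<open>Block circulant matrix of an n1 x n2 x n3 tensor (size n1 n3 x n2 n3):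
  block (a,b) (0-based) is the frontal slice number (a - b) mod n3.\<close>
definition bcirc :: "nat \<Rightarrow> nat \<Rightarrow> nat \<Rightarrow> tensor \<Rightarrow> rmat" where
  "bcirc n1 n2 n3 X = (\<lambda>r c. if r < n1 * n3 \<and> c < n2 * n3
      then X (r mod n1) (c mod n2) ((r div n1 + n3 - c div n2) mod n3) else 0)"

text \<open>unfold: stack frontal slices vertically (n1 n3 x n2); fold is its inverse.\<close>
definition tunfold :: "nat \<Rightarrow> nat \<Rightarrow> tensor \<Rightarrow> rmat" where
  "tunfold n1 n3 X = (\<lambda>r c. X (r mod n1) c (r div n1))"

definition tfold :: "nat \<Rightarrow> nat \<Rightarrow> rmat \<Rightarrow> tensor" where
  "tfold n1 n3 M = (\<lambda>i j k. M (k * n1 + i) j)"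

definition mmul :: "nat \<Rightarrow> rmat \<Rightarrow> rmat \<Rightarrow> rmat" where
  "mmul n M N = (\<lambda>i j. \<Sum>l<n. M i l * N l j)"

definition tprod :: "nat \<Rightarrow> nat \<Rightarrow> nat \<Rightarrow> tensor \<Rightarrow> tensor \<Rightarrow> tensor" where
  "tprod n1 n2 n3 X Y = tfold n1 n3 (mmul (n2 * n3) (bcirc n1 n2 n3 X) (tunfold n2 n3 Y))"

definition ttrans :: "nat \<Rightarrow> tensor \<Rightarrow> tensor" where
  "ttrans n3 X = (\<lambda>i j k. X j i ((n3 - k) mod n3))"

definition tid :: "nat \<Rightarrow> tensor" where
  "tid n = (\<lambda>i j k. if i = j \<and> k = 0 then 1 else 0)"

definition tsub :: "tensor \<Rightarrow> tensor \<Rightarrow> tensor" where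
  "tsub X Y = (\<lambda>i j k. X i j k - Y i j k)"

definition tpow :: "nat \<Rightarrow> nat \<Rightarrow> tensor \<Rightarrow> nat \<Rightarrow> tensor" where
  "tpow n n3 A j = ((tprod n n n3 A) ^^ j) (tid n)"

text \<open>Concatenation along the second mode of a family A 0, A 1, ... of tensors,
  each having w columns; block number b occupies columns b w, ..., b w + w - 1.\<close>
definition tcat :: "nat \<Rightarrow> (nat \<Rightarrow> tensor) \<Rightarrow> tensor" where
  "tcat w A = (\<lambda>i j k. A (j div w) i (j mod w) k)"

definition teq :: "nat \<Rightarrow> nat \<Rightarrow> nat \<Rightarrow> tensor \<Rightarrow> tensor \<Rightarrow> bool" where
  "teq n1 n2 n3 X Y \<longleftrightarrow> (\<forall>i<n1. \<forall>j<n2. \<forall>k<n3. X i j k = Y i j k)"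

definition snorm :: "nat \<Rightarrow> nat \<Rightarrow> rmat \<Rightarrow> real" where
  "snorm m n M = (SUP x\<in>{x :: nat \<Rightarrow> real. (\<Sum>j<n. (x j)\<^sup>2) \<le> 1}.
      sqrt (\<Sum>i<m. (\<Sum>j<n. M i j * x j)\<^sup>2))"

definition tnorm :: "nat \<Rightarrow> nat \<Rightarrow> nat \<Rightarrow> tensor \<Rightarrow> real" where
  "tnorm n1 n2 n3 X = snorm (n1 * n3) (n2 * n3) (bcirc n1 n2 n3 X)"

end

theory Submission
  imports Defs
begin

text \<open>
  The map X \<mapsto> bcirc X turns T-products, tensor transposes and the identity tensor into
  matrix products, transposes and the identity, and the tensor spectral norm is defined
  through it. So with M = bcirc X and V = bcirc Q the claim is about matrices, and
  V^T V = I makes E = I - V V^T an orthogonal projector.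

  For a unit vector y let w = E M y and let \<nu> j be the norm of the j-th vector of the
  alternating sequence w, M^T w, M M^T w, \<dots>. Adjointness and Cauchy-Schwarz make
  \<nu> log-convex, \<nu> (j + 1)^2 \<le> \<nu> j * \<nu> (j + 2), hence \<nu> 1 ^ k * \<nu> 0 \<le> \<nu> 0 ^ k * \<nu> k.
  Since E is self-adjoint and idempotent, \<nu> 0 ^ 2 \<le> \<nu> 1 and
  \<nu> (2 q + 1) \<le> \<nu> 0 * \<parallel>E (M M^T)^q M\<parallel>, so \<nu> 0 ^ (2 q + 1) \<le> \<parallel>E (M M^T)^q M\<parallel>.
  Finally (M M^T)^q M is a block of columns of the matrix of Z, so its projected norm is
  at most that of Z.
\<close>

section \<open>Cyclic index arithmetic\<close>

text \<open>On nat, (a + n - b) mod n is how bcirc and ttrans encode (a - b) mod n.\<close>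

lemma int_circ_diff:
  fixes a b n :: nat
  assumes "b \<le> n"
  shows "int ((a + n - b) mod n) = (int a - int b) mod int n"
proof -
  have "int ((a + n - b) mod n) = (int a - int b + int n) mod int n"
    using assms by (simp add: of_nat_mod of_nat_diff algebra_simps)
  also have "\<dots> = (int a - int b) mod int n" by (rule mod_add_self2)
  finally show ?thesis .
qed

lemma circ_diff_circ_diff:
  fixes a b c n :: nat
  assumes "a < n" "b < n" "c < n"
  shows "((a + n - c) mod n + n - (b + n - c) mod n) mod n = (a + n - b) mod n"
proof -
  have "int (((a + n - c) mod n + n - (b + n - c) mod n) mod n)
      = ((int a - int c) mod int n - (int b - int c) mod int n) mod int n"
    using assms by (simp add: int_circ_diff less_imp_le)
  also have "\<dots> = int ((a + n - b) mod n)"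
    using assms by (simp add: int_circ_diff mod_simps)
  finally show ?thesis by linarith
qed

lemma circ_diff_neg:
  fixes a b n :: nat
  assumes "a < n" "b < n"
  shows "(n - (a + n - b) mod n) mod n = (b + n - a) mod n"
proof -
  have "int ((n - (a + n - b) mod n) mod n) = (0 - int ((a + n - b) mod n)) mod int n"
    using int_circ_diff[of "(a + n - b) mod n" n 0] assms by simp
  also have "\<dots> = int ((b + n - a) mod n)"
    using assms by (simp add: int_circ_diff less_imp_le mod_simps)
  finally show ?thesis by linarith
qed

lemma circ_diff_eq_0_iff:
  fixes a b n :: nat
  assumes "a < n" "b < n"
  shows "(a + n - b) mod n = 0 \<longleftrightarrow> a = b"
proof (cases "b \<le> a")
  case True
  then have "a + n - b = (a - b) + n" by simp
  moreover have "a - b < n" using assms by simp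
  ultimately have "(a + n - b) mod n = a - b" by (simp only: mod_add_self2 mod_less)
  then show ?thesis using True by simp
next
  case False
  then have "0 < a + n - b" "a + n - b < n" using assms by auto
  then show ?thesis using False by (simp only: mod_less) simp
qed

lemma sum_rotate_mod:
  fixes n c :: nat and g :: "nat \<Rightarrow> real"
  assumes "0 < n"
  shows "(\<Sum>b<n. g ((b + c) mod n)) = (\<Sum>b<n. g b)"
proof -
  have "inj_on (\<lambda>b. (b + c) mod n) {..<n}"
  proof
    fix x y
    assume "x \<in> {..<n}" "y \<in> {..<n}" and eq: "(x + c) mod n = (y + c) mod n"
    have "(int x + int c) mod int n = (int y + int c) mod int n"
      using arg_cong[OF eq, of int] by (simp add: zmod_int)
    then have "((int x + int c) mod int n - int c) mod int n
        = ((int y + int c) mod int n - int c) mod int n" by simp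
    then have "int x mod int n = int y mod int n" by (simp add: mod_diff_left_eq)
    with \<open>x \<in> {..<n}\<close> \<open>y \<in> {..<n}\<close> show "x = y" by simp
  qed
  moreover have "(\<lambda>b. (b + c) mod n) ` {..<n} \<subseteq> {..<n}" using assms by auto
  ultimately have "bij_betw (\<lambda>b. (b + c) mod n) {..<n} {..<n}"
    by (simp add: bij_betw_def endo_inj_surj)
  then show ?thesis by (rule sum.reindex_bij_betw)
qed

lemma block_index_less:
  fixes a b n p :: nat
  assumes "a < p" "b < n"
  shows "a * n + b < n * p"
proof -
  have "a * n + b < (a + 1) * n" using assms by simp
  also have "\<dots> \<le> p * n" using assms by (intro mult_right_mono) auto
  also have "\<dots> = n * p" by (rule mult.commute)
  finally show ?thesis .
qed

lemma sum_lessThan_mult: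
  fixes f :: "nat \<Rightarrow> real"
  shows "(\<Sum>l<n * p. f l) = (\<Sum>a<p. \<Sum>b<n. f (a * n + b))"
proof -
  have "(\<Sum>l<n * p. f l) = (\<Sum>a<p. sum f {a * n..<a * n + n})"
    using sum.nat_group[of f n p] by (simp add: mult.commute)
  also have "\<dots> = (\<Sum>a<p. \<Sum>b<n. f (a * n + b))"
    by (simp add: sum.shift_bounds_nat_ivl[of f 0 _ n, simplified] add.commute lessThan_atLeast0)
  finally show ?thesis .
qed

section \<open>Matrices and vectors\<close>

definition is_rmat :: "nat \<Rightarrow> nat \<Rightarrow> rmat \<Rightarrow> bool" where
  "is_rmat m n M \<longleftrightarrow> (\<forall>i j. M i j \<noteq> 0 \<longrightarrow> i < m \<and> j < n)"

definition mtrans :: "rmat \<Rightarrow> rmat" where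
  "mtrans M = (\<lambda>i j. M j i)"

definition idmat :: "nat \<Rightarrow> rmat" where
  "idmat n = (\<lambda>i j. if i < n \<and> i = j then 1 else 0)"

definition msub :: "rmat \<Rightarrow> rmat \<Rightarrow> rmat" where
  "msub A B = (\<lambda>i j. A i j - B i j)"

definition mpow :: "nat \<Rightarrow> rmat \<Rightarrow> nat \<Rightarrow> rmat" where
  "mpow n A j = (mmul n A ^^ j) (idmat n)"

definition mvmul :: "nat \<Rightarrow> rmat \<Rightarrow> (nat \<Rightarrow> real) \<Rightarrow> nat \<Rightarrow> real" where
  "mvmul n M x = (\<lambda>i. \<Sum>j<n. M i j * x j)"

definition dotp :: "nat \<Rightarrow> (nat \<Rightarrow> real) \<Rightarrow> (nat \<Rightarrow> real) \<Rightarrow> real" where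
  "dotp n x y = (\<Sum>i<n. x i * y i)"

abbreviation vnorm :: "nat \<Rightarrow> (nat \<Rightarrow> real) \<Rightarrow> real" where
  "vnorm n x \<equiv> L2_set x {..<n}"

lemma is_rmatD: "is_rmat m n M \<Longrightarrow> \<not> (i < m \<and> j < n) \<Longrightarrow> M i j = 0"
  unfolding is_rmat_def by blast

lemma is_rmat_mmul:
  assumes "is_rmat m k A" "is_rmat k' n B"
  shows "is_rmat m n (mmul k A B)"
  unfolding is_rmat_def
proof (intro allI impI)
  fix i j
  assume "mmul k A B i j \<noteq> 0"
  then obtain l where "A i l * B l j \<noteq> 0" unfolding mmul_def by (meson sum.neutral)
  then show "i < m \<and> j < n" using assms by (auto simp: is_rmat_def)
qed

lemma is_rmat_idmat: "is_rmat n n (idmat n)"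
  by (simp add: is_rmat_def idmat_def)

lemma is_rmat_msub: "is_rmat m n A \<Longrightarrow> is_rmat m n B \<Longrightarrow> is_rmat m n (msub A B)"
  by (simp add: is_rmat_def msub_def) (metis diff_self)

lemma is_rmat_mtrans: "is_rmat m n M \<Longrightarrow> is_rmat n m (mtrans M)"
  by (auto simp: is_rmat_def mtrans_def)

lemma mtrans_mtrans [simp]: "mtrans (mtrans M) = M"
  by (simp add: mtrans_def)

lemma mtrans_idmat [simp]: "mtrans (idmat n) = idmat n"
  by (auto simp: mtrans_def idmat_def intro!: ext)

lemma mtrans_msub: "mtrans (msub A B) = msub (mtrans A) (mtrans B)"
  by (simp add: mtrans_def msub_def)

lemma mtrans_mmul: "mtrans (mmul n A B) = mmul n (mtrans B) (mtrans A)"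
  by (simp add: mtrans_def mmul_def mult.commute)

lemma mmul_assoc: "mmul n (mmul k A B) C = mmul k A (mmul n B C)"
  unfolding mmul_def
  by (auto simp: sum_distrib_left sum_distrib_right mult.assoc intro!: ext sum.swap)

lemma mmul_msub_left: "mmul n (msub A B) C = msub (mmul n A C) (mmul n B C)"
  by (simp add: mmul_def msub_def left_diff_distrib sum_subtractf)

lemma mmul_msub_right: "mmul n A (msub B C) = msub (mmul n A B) (mmul n A C)"
  by (simp add: mmul_def msub_def right_diff_distrib sum_subtractf)

lemma mmul_idmat_left:
  assumes "is_rmat n k A"
  shows "mmul n (idmat n) A = A"
proof (intro ext)
  fix i j
  have "mmul n (idmat n) A i j = (if i < n then A i j else 0)"
    by (simp add: mmul_def idmat_def if_distrib[of "\<lambda>x. x * _"] cong: if_cong)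
  then show "mmul n (idmat n) A i j = A i j" using assms by (simp add: is_rmatD)
qed

lemma mmul_idmat_right:
  assumes "is_rmat k n A"
  shows "mmul n A (idmat n) = A"
  using mmul_idmat_left[OF is_rmat_mtrans[OF assms]] by (metis mtrans_idmat mtrans_mmul mtrans_mtrans)

lemma mpow_0 [simp]: "mpow n A 0 = idmat n"
  by (simp add: mpow_def)

lemma mpow_Suc: "mpow n A (Suc j) = mmul n A (mpow n A j)"
  by (simp add: mpow_def)

lemma mmul_mpow_commute:
  assumes "is_rmat n n A"
  shows "mmul n (mpow n A j) A = mmul n A (mpow n A j)"
proof (induction j)
  case 0
  show ?case using assms by (simp add: mmul_idmat_left mmul_idmat_right)
next
  case (Suc j)
  then show ?case by (simp add: mpow_Suc mmul_assoc)
qed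

lemma mtrans_mpow:
  assumes "is_rmat n n A" "mtrans A = A"
  shows "mtrans (mpow n A j) = mpow n A j"
proof (induction j)
  case (Suc j)
  then show ?case by (simp add: mpow_Suc mtrans_mmul assms mmul_mpow_commute)
qed simp

lemma mvmul_mmul: "mvmul n (mmul k A B) x = mvmul k A (mvmul n B x)"
  unfolding mvmul_def mmul_def
  by (auto simp: sum_distrib_left sum_distrib_right mult.assoc intro!: ext sum.swap)

lemma dotp_commute: "dotp n x y = dotp n y x"
  by (simp add: dotp_def mult.commute)

lemma dotp_mvmul: "dotp m (mvmul n A x) y = dotp n x (mvmul m (mtrans A) y)"
  unfolding dotp_def mvmul_def mtrans_def
  by (auto simp: sum_distrib_left sum_distrib_right mult_ac intro: sum.swap)

section \<open>Block circulant matrices\<close>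

lemma bcirc_in_range:
  assumes "r < n1 * n3" "c < n2 * n3"
  shows "bcirc n1 n2 n3 X r c = X (r mod n1) (c mod n2) ((r div n1 + n3 - c div n2) mod n3)"
  using assms by (simp add: bcirc_def)

lemma is_rmat_bcirc: "is_rmat (n1 * n3) (n2 * n3) (bcirc n1 n2 n3 X)"
  by (simp add: is_rmat_def bcirc_def)

lemma tprod_eq_sum:
  assumes "i < n1" "k < n3"
  shows "tprod n1 n2 n3 A B i j k = (\<Sum>b<n3. \<Sum>l<n2. A i l ((k + n3 - b) mod n3) * B l j b)"
proof -
  have row: "k * n1 + i < n1 * n3" using block_index_less[OF assms(2,1)] .
  have "tprod n1 n2 n3 A B i j k
      = (\<Sum>l<n2 * n3. bcirc n1 n2 n3 A (k * n1 + i) l * B (l mod n2) j (l div n2))"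
    by (simp add: tprod_def tfold_def mmul_def tunfold_def)
  also have "\<dots> = (\<Sum>b<n3. \<Sum>l<n2. A i l ((k + n3 - b) mod n3) * B l j b)"
    unfolding sum_lessThan_mult
    using assms row block_index_less[of _ n3 _ n2] by (intro sum.cong refl) (simp add: bcirc_in_range)
  finally show ?thesis .
qed

lemma mmul_bcirc_eq_sum:
  assumes "r < n1 * n3" "c < n4 * n3"
  shows "mmul (n2 * n3) (bcirc n1 n2 n3 A) (bcirc n2 n4 n3 B) r c
    = (\<Sum>b<n3. \<Sum>l<n2. A (r mod n1) l ((r div n1 + n3 - b) mod n3)
        * B l (c mod n4) ((b + n3 - c div n4) mod n3))"
  unfolding mmul_def sum_lessThan_mult
  using assms block_index_less[of _ n3 _ n2] by (intro sum.cong refl) (simp add: bcirc_in_range)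

lemma bcirc_tprod:
  "bcirc n1 n4 n3 (tprod n1 n2 n3 A B) = mmul (n2 * n3) (bcirc n1 n2 n3 A) (bcirc n2 n4 n3 B)"
proof (intro ext)
  fix r c
  show "bcirc n1 n4 n3 (tprod n1 n2 n3 A B) r c
    = mmul (n2 * n3) (bcirc n1 n2 n3 A) (bcirc n2 n4 n3 B) r c"
  proof (cases "r < n1 * n3 \<and> c < n4 * n3")
    case False
    then show ?thesis
      using is_rmat_mmul[OF is_rmat_bcirc is_rmat_bcirc] by (metis is_rmatD is_rmat_bcirc)
  next
    case True
    define R C where "R = r div n1" and "C = c div n4"
    have "R < n3" "C < n3" "0 < n3" "0 < n1"
      using True by (auto simp: R_def C_def less_mult_imp_div_less mult.commute intro: gr0I)
    have "bcirc n1 n4 n3 (tprod n1 n2 n3 A B) r c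
        = (\<Sum>b<n3. \<Sum>l<n2. A (r mod n1) l (((R + n3 - C) mod n3 + n3 - b) mod n3)
            * B l (c mod n4) b)"
      using True \<open>0 < n1\<close> \<open>0 < n3\<close> by (simp add: bcirc_in_range tprod_eq_sum R_def C_def)
    \<comment> \<open>substitute b \<mapsto> b - C (mod n3)\<close>
    also have "\<dots> = (\<Sum>b<n3. \<Sum>l<n2.
        A (r mod n1) l (((R + n3 - C) mod n3 + n3 - (b + (n3 - C)) mod n3) mod n3)
          * B l (c mod n4) ((b + (n3 - C)) mod n3))"
      by (rule sum_rotate_mod[OF \<open>0 < n3\<close>, symmetric])
    also have "\<dots> = (\<Sum>b<n3. \<Sum>l<n2. A (r mod n1) l ((R + n3 - b) mod n3)
        * B l (c mod n4) ((b + n3 - C) mod n3))"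
      using \<open>R < n3\<close> \<open>C < n3\<close> circ_diff_circ_diff[of R n3 _ C]
      by (intro sum.cong refl) (simp add: Nat.add_diff_assoc)
    also have "\<dots> = mmul (n2 * n3) (bcirc n1 n2 n3 A) (bcirc n2 n4 n3 B) r c"
      using True by (simp add: mmul_bcirc_eq_sum R_def C_def)
    finally show ?thesis .
  qed
qed

lemma bcirc_ttrans: "bcirc n2 n1 n3 (ttrans n3 X) = mtrans (bcirc n1 n2 n3 X)"
proof (intro ext)
  fix r c
  show "bcirc n2 n1 n3 (ttrans n3 X) r c = mtrans (bcirc n1 n2 n3 X) r c"
  proof (cases "r < n2 * n3 \<and> c < n1 * n3")
    case True
    then have "r div n2 < n3" "c div n1 < n3" by (auto simp: less_mult_imp_div_less mult.commute)
    then show ?thesis using True circ_diff_neg by (simp add: mtrans_def bcirc_in_range ttrans_def)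
  qed (auto simp: mtrans_def bcirc_def)
qed

lemma bcirc_tid: "bcirc n n n3 (tid n) = idmat (n * n3)"
proof (intro ext)
  fix r c
  show "bcirc n n n3 (tid n) r c = idmat (n * n3) r c"
  proof (cases "r < n * n3 \<and> c < n * n3")
    case True
    then have "r div n < n3" "c div n < n3" by (auto simp: less_mult_imp_div_less mult.commute)
    then have "r mod n = c mod n \<and> (r div n + n3 - c div n) mod n3 = 0 \<longleftrightarrow> r = c"
      by (metis circ_diff_eq_0_iff div_mult_mod_eq)
    then show ?thesis using True by (simp add: bcirc_in_range tid_def idmat_def)
  qed (auto simp: idmat_def bcirc_def)
qed

lemma bcirc_tsub: "bcirc n1 n2 n3 (tsub A B) = msub (bcirc n1 n2 n3 A) (bcirc n1 n2 n3 B)"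
  by (simp add: bcirc_def tsub_def msub_def fun_eq_iff)

lemma bcirc_teq:
  assumes "teq n1 n2 n3 X Y"
  shows "bcirc n1 n2 n3 X = bcirc n1 n2 n3 Y"
proof (intro ext)
  fix r c
  show "bcirc n1 n2 n3 X r c = bcirc n1 n2 n3 Y r c"
  proof (cases "r < n1 * n3 \<and> c < n2 * n3")
    case True
    then have "0 < n1" "0 < n2" "0 < n3" by (auto intro: gr0I)
    then show ?thesis using True assms by (simp add: bcirc_in_range teq_def)
  qed (auto simp: bcirc_def)
qed

lemma bcirc_tpow: "bcirc n n n3 (tpow n n3 A j) = mpow (n * n3) (bcirc n n n3 A) j"
  by (induction j) (simp_all add: tpow_def mpow_Suc bcirc_tprod bcirc_tid)

lemma tprod_tcat: "tprod n1 n2 n3 Y (tcat w F) = tcat w (\<lambda>p. tprod n1 n2 n3 Y (F p))"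
  by (simp add: tprod_def tcat_def tfold_def tunfold_def mmul_def fun_eq_iff)

lemma bcirc_tcat_block:
  assumes "0 < n2" "p < t" "r < n1 * n3" "c < n2 * n3"
  shows "bcirc n1 (n2 * t) n3 (tcat n2 F) r (c div n2 * (n2 * t) + (p * n2 + c mod n2))
       = bcirc n1 n2 n3 (F p) r c"
proof -
  have col: "p * n2 + c mod n2 < n2 * t"
    using block_index_less[OF assms(2) mod_less_divisor[OF assms(1)]] .
  have "c div n2 < n3" using assms by (simp add: less_mult_imp_div_less mult.commute)
  then have "c div n2 * (n2 * t) + (p * n2 + c mod n2) < n2 * t * n3"
    using block_index_less col by blast
  then show ?thesis using assms col by (simp add: bcirc_in_range tcat_def)
qed

section \<open>The spectral norm\<close>

lemma dotp_self: "dotp n x x = (vnorm n x)\<^sup>2"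
  unfolding dotp_def L2_set_def by (simp add: sum_nonneg power2_eq_square)

lemma dotp_le_vnorm: "dotp n x y \<le> vnorm n x * vnorm n y"
proof -
  have "dotp n x y \<le> (\<Sum>i<n. \<bar>x i\<bar> * \<bar>y i\<bar>)"
    unfolding dotp_def by (intro sum_mono) (simp flip: abs_mult)
  also have "\<dots> \<le> vnorm n x * vnorm n y" by (rule L2_set_mult_ineq)
  finally show ?thesis .
qed

lemma abs_mvmul_le: "\<bar>mvmul n M x i\<bar> \<le> vnorm n (M i) * vnorm n x"
proof -
  have "\<bar>mvmul n M x i\<bar> \<le> (\<Sum>j<n. \<bar>M i j\<bar> * \<bar>x j\<bar>)"
    unfolding mvmul_def by (rule order_trans[OF sum_abs]) (simp add: abs_mult)
  also have "\<dots> \<le> vnorm n (M i) * vnorm n x" by (rule L2_set_mult_ineq)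
  finally show ?thesis .
qed

lemma snorm_eq_SUP: "snorm m n M = (SUP x\<in>{x. vnorm n x \<le> 1}. vnorm m (mvmul n M x))"
  by (simp add: snorm_def L2_set_def mvmul_def)

lemma bdd_above_vnorm_mvmul: "bdd_above ((\<lambda>x. vnorm m (mvmul n M x)) ` {x. vnorm n x \<le> 1})"
proof (rule bdd_aboveI2)
  fix x assume "x \<in> {x. vnorm n x \<le> 1}"
  then have x: "vnorm n x \<le> 1" by simp
  have "vnorm m (mvmul n M x) \<le> (\<Sum>i<m. \<bar>mvmul n M x i\<bar>)" by (rule L2_set_le_sum_abs)
  also have "\<dots> \<le> (\<Sum>i<m. vnorm n (M i))"
  proof (intro sum_mono)
    fix i
    have "\<bar>mvmul n M x i\<bar> \<le> vnorm n (M i) * vnorm n x" by (rule abs_mvmul_le)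
    also have "\<dots> \<le> vnorm n (M i)" using x by (simp add: mult_left_le)
    finally show "\<bar>mvmul n M x i\<bar> \<le> vnorm n (M i)" .
  qed
  finally show "vnorm m (mvmul n M x) \<le> (\<Sum>i<m. vnorm n (M i))" .
qed

lemma snorm_upper: "vnorm n x \<le> 1 \<Longrightarrow> vnorm m (mvmul n M x) \<le> snorm m n M"
  unfolding snorm_eq_SUP by (rule cSUP_upper[OF _ bdd_above_vnorm_mvmul]) simp

lemma snorm_least:
  assumes "\<And>x. vnorm n x \<le> 1 \<Longrightarrow> vnorm m (mvmul n M x) \<le> c"
  shows "snorm m n M \<le> c"
proof -
  have "(\<lambda>_. 0) \<in> {x. vnorm n x \<le> 1}" by (simp add: L2_set_def)
  then show ?thesis unfolding snorm_eq_SUP by (intro cSUP_least) (use assms in auto)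
qed

lemma snorm_nonneg: "0 \<le> snorm m n M"
  by (rule order_trans[OF L2_set_nonneg snorm_upper[where x = "\<lambda>_. 0"]]) (simp add: L2_set_def)

lemma vnorm_mvmul_le: "vnorm m (mvmul n M x) \<le> snorm m n M * vnorm n x"
proof (cases "vnorm n x = 0")
  case True
  then have "mvmul n M x = (\<lambda>_. 0)" by (simp add: L2_set_eq_0_iff mvmul_def)
  then show ?thesis using True by (simp add: L2_set_def)
next
  case False
  define t where "t = vnorm n x"
  have "t > 0" using False L2_set_nonneg[of x "{..<n}"] unfolding t_def by linarith
  have "vnorm n (\<lambda>j. x j / t) = vnorm n x / t"
    using L2_set_left_distrib[of "1 / t" x "{..<n}"] \<open>t > 0\<close> by simp
  then have "vnorm m (mvmul n M (\<lambda>j. x j / t)) \<le> snorm m n M"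
    using \<open>t > 0\<close> by (intro snorm_upper) (simp add: t_def)
  moreover have "vnorm m (mvmul n M (\<lambda>j. x j / t)) = vnorm m (mvmul n M x) / t"
    using L2_set_left_distrib[of "1 / t" "mvmul n M x" "{..<m}"] \<open>t > 0\<close>
    by (simp add: mvmul_def sum_divide_distrib)
  ultimately show ?thesis using \<open>t > 0\<close> by (simp add: t_def divide_le_eq mult.commute)
qed

lemma snorm_column_selection_le:
  fixes g :: "nat \<Rightarrow> nat"
  assumes inj: "inj_on g {..<n}" and range: "g ` {..<n} \<subseteq> {..<n'}"
    and cols: "\<And>r c. r < m \<Longrightarrow> c < n \<Longrightarrow> A r c = B r (g c)"
  shows "snorm m n A \<le> snorm m n' B"
proof (rule snorm_least)
  fix x
  assume x: "vnorm n x \<le> 1"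
  define x' where "x' = (\<lambda>c'. if c' \<in> g ` {..<n} then x (the_inv_into {..<n} g c') else 0)"
  have x'_g: "x' (g c) = x c" if "c < n" for c
    using that by (simp add: x'_def the_inv_into_f_f[OF inj])
  have reindex: "(\<Sum>c'<n'. f c' * x' c') = (\<Sum>c<n. f (g c) * x c)" for f :: "nat \<Rightarrow> real"
  proof -
    have "(\<Sum>c'<n'. f c' * x' c') = (\<Sum>c'\<in>g ` {..<n}. f c' * x' c')"
      using range by (intro sum.mono_neutral_right) (auto simp: x'_def)
    also have "\<dots> = (\<Sum>c<n. f (g c) * x c)" by (simp add: sum.reindex[OF inj] x'_g)
    finally show ?thesis .
  qed
  have "vnorm n' x' = vnorm n x"
    using reindex[of x'] by (simp add: L2_set_def power2_eq_square x'_g)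
  then have "vnorm m (mvmul n' B x') \<le> snorm m n' B" using x by (intro snorm_upper) simp
  moreover have "mvmul n' B x' r = mvmul n A x r" if "r < m" for r
    using reindex[of "B r"] that cols by (simp add: mvmul_def)
  ultimately show "vnorm m (mvmul n A x) \<le> snorm m n' B"
    by (metis (no_types, lifting) L2_set_cong lessThan_iff)
qed

lemma tnorm_tcat_ge:
  assumes "0 < n2" "p < t"
  shows "tnorm n1 n2 n3 (F p) \<le> tnorm n1 (n2 * t) n3 (tcat n2 F)"
  unfolding tnorm_def
proof (rule snorm_column_selection_le)
  define g where "g c = c div n2 * (n2 * t) + (p * n2 + c mod n2)" for c
  have col: "p * n2 + c mod n2 < n2 * t" for c
    using block_index_less[OF assms(2) mod_less_divisor[OF assms(1)]] .
  have g_div_mod: "g c div (n2 * t) = c div n2" "g c mod (n2 * t) = p * n2 + c mod n2" for c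
    using col[of c] unfolding g_def
    by (metis add.commute add_cancel_right_left div_less div_mult_self3 not_less_zero, simp)
  show "inj_on g {..<n2 * n3}"
  proof
    fix c c' assume "g c = g c'"
    then have "c div n2 = c' div n2" "p * n2 + c mod n2 = p * n2 + c' mod n2"
      using g_div_mod by metis+
    then show "c = c'" by (metis add_left_cancel div_mult_mod_eq)
  qed
  show "g ` {..<n2 * n3} \<subseteq> {..<n2 * t * n3}"
  proof clarify
    fix c assume "c < n2 * n3"
    then have "c div n2 < n3" by (simp add: less_mult_imp_div_less mult.commute)
    then show "g c < n2 * t * n3" unfolding g_def using block_index_less col by blast
  qed
  show "bcirc n1 n2 n3 (F p) r c = bcirc n1 (n2 * t) n3 (tcat n2 F) r (g c)"
    if "r < n1 * n3" "c < n2 * n3" for r c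
    using bcirc_tcat_block[OF assms that] by (simp add: g_def)
qed

section \<open>Orthogonal projectors and the power bound\<close>

text \<open>E^T E = E forces E^T = E and hence E E = E.\<close>

definition orth_proj :: "nat \<Rightarrow> rmat \<Rightarrow> bool" where
  "orth_proj n E \<longleftrightarrow> is_rmat n n E \<and> mmul n (mtrans E) E = E"

lemma orth_proj_mtrans:
  assumes "orth_proj n E"
  shows "mtrans E = E"
proof -
  have "mtrans E = mtrans (mmul n (mtrans E) E)" using assms by (metis orth_proj_def)
  also have "\<dots> = mmul n (mtrans E) E" by (simp add: mtrans_mmul)
  also have "\<dots> = E" using assms by (simp add: orth_proj_def)
  finally show ?thesis .
qed

lemma orth_proj_dotp:
  assumes "orth_proj n E"
  shows "dotp n (mvmul n E x) (mvmul n E z) = dotp n (mvmul n E x) z"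
proof -
  have "dotp n (mvmul n E x) (mvmul n E z) = dotp n x (mvmul n (mmul n (mtrans E) E) z)"
    by (simp add: dotp_mvmul mvmul_mmul)
  also have "\<dots> = dotp n x (mvmul n (mtrans E) z)"
    using assms by (simp add: orth_proj_def orth_proj_mtrans[OF assms])
  also have "\<dots> = dotp n (mvmul n E x) z" by (simp add: dotp_mvmul)
  finally show ?thesis .
qed

lemma orth_proj_complement:
  assumes V: "is_rmat n k V" and orth: "mmul n (mtrans V) V = idmat k"
  shows "orth_proj n (msub (idmat n) (mmul k V (mtrans V)))"
proof -
  define P where "P = mmul k V (mtrans V)"
  have P: "is_rmat n n P" unfolding P_def using V by (intro is_rmat_mmul is_rmat_mtrans)
  have "mmul n P P = mmul k V (mmul k (mmul n (mtrans V) V) (mtrans V))"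
    by (simp add: P_def mmul_assoc)
  also have "\<dots> = P"
    using is_rmat_mtrans[OF V] by (simp add: orth mmul_idmat_left P_def)
  finally have "mmul n P P = P" .
  then have "mmul n (msub (idmat n) P) (msub (idmat n) P) = msub (idmat n) P"
    using P is_rmat_idmat[of n]
    by (simp add: mmul_msub_left mmul_msub_right mmul_idmat_left mmul_idmat_right)
      (simp add: msub_def)
  moreover have "mtrans P = P" by (simp add: P_def mtrans_mmul)
  ultimately show ?thesis
    using P is_rmat_idmat[of n] by (simp add: orth_proj_def mtrans_msub is_rmat_msub flip: P_def)
qed

lemma vnorm_mvmul_sq_le:
  "(vnorm m (mvmul n A v))\<^sup>2 \<le> vnorm n v * vnorm n (mvmul m (mtrans A) (mvmul n A v))"
  using dotp_le_vnorm[of n v] by (simp add: dotp_mvmul flip: dotp_self)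

lemma vnorm_orth_proj_mvmul_sq_le:
  assumes "orth_proj m E"
  shows "(vnorm m (mvmul m E (mvmul n M y)))\<^sup>2
    \<le> vnorm n y * vnorm n (mvmul m (mtrans M) (mvmul m E (mvmul n M y)))"
proof -
  define w where "w = mvmul m E (mvmul n M y)"
  have "(vnorm m w)\<^sup>2 = dotp m w (mvmul n M y)"
    using orth_proj_dotp[OF assms] by (simp add: w_def flip: dotp_self)
  also have "\<dots> = dotp n y (mvmul m (mtrans M) w)" by (subst dotp_commute) (rule dotp_mvmul)
  also have "\<dots> \<le> vnorm n y * vnorm n (mvmul m (mtrans M) w)" by (rule dotp_le_vnorm)
  finally show ?thesis unfolding w_def .
qed

lemma vnorm_mtrans_sym_orth_proj_le:
  assumes E: "orth_proj m E" and A: "mtrans A = A"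
  shows "vnorm n (mvmul m (mtrans M) (mvmul m A (mvmul m E x)))
    \<le> vnorm m (mvmul m E x) * snorm m n (mmul m E (mmul m A M))"
proof -
  define v where "v = mvmul m E x"
  define u where "u = mvmul m (mtrans M) (mvmul m A v)"
  have "(vnorm n u)\<^sup>2 = dotp m (mvmul m A v) (mvmul n M u)"
    unfolding dotp_self[symmetric] u_def by (subst dotp_mvmul) simp
  also have "\<dots> = dotp m v (mvmul m A (mvmul n M u))"
    by (subst dotp_mvmul) (simp add: A)
  also have "\<dots> = dotp m v (mvmul m E (mvmul m A (mvmul n M u)))"
    unfolding v_def by (rule orth_proj_dotp[OF E, symmetric])
  also have "\<dots> = dotp m v (mvmul n (mmul m E (mmul m A M)) u)"
    by (simp add: mvmul_mmul)
  also have "\<dots> \<le> vnorm m v * (snorm m n (mmul m E (mmul m A M)) * vnorm n u)"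
    by (intro order_trans[OF dotp_le_vnorm] mult_left_mono vnorm_mvmul_le) simp
  finally have "vnorm n u * vnorm n u
      \<le> vnorm m v * snorm m n (mmul m E (mmul m A M)) * vnorm n u"
    by (simp add: power2_eq_square mult_ac)
  moreover have "0 \<le> vnorm m v * snorm m n (mmul m E (mmul m A M))"
    by (simp add: snorm_nonneg)
  ultimately show ?thesis
    unfolding u_def[symmetric] v_def[symmetric]
    by (metis L2_set_nonneg mult_right_le_imp_le order_le_less)
qed

lemma log_convex_seq_power_le:
  fixes \<nu> :: "nat \<Rightarrow> real"
  assumes nonneg: "\<And>j. 0 \<le> \<nu> j"
    and log_convex: "\<And>j. (\<nu> (Suc j))\<^sup>2 \<le> \<nu> j * \<nu> (Suc (Suc j))"
  shows "\<nu> 1 ^ j * \<nu> 0 \<le> \<nu> 0 ^ j * \<nu> j"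
proof -
  have ratio: "\<nu> 1 * \<nu> j \<le> \<nu> 0 * \<nu> (Suc j)" for j
  proof (induction j)
    case (Suc j)
    show ?case
    proof (cases "\<nu> j = 0")
      case True
      then have "\<nu> (Suc j) = 0" using log_convex[of j] by simp
      then show ?thesis using nonneg by simp
    next
      case False
      then have "0 < \<nu> j" using nonneg[of j] by simp
      have "\<nu> j * (\<nu> 1 * \<nu> (Suc j)) = (\<nu> 1 * \<nu> j) * \<nu> (Suc j)" by (simp add: mult_ac)
      also have "\<dots> \<le> (\<nu> 0 * \<nu> (Suc j)) * \<nu> (Suc j)"
        using Suc.IH nonneg by (rule mult_right_mono)
      also have "\<dots> \<le> \<nu> 0 * (\<nu> j * \<nu> (Suc (Suc j)))"
        using log_convex[of j] nonneg by (simp add: power2_eq_square mult.assoc mult_left_mono)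
      finally show ?thesis using \<open>0 < \<nu> j\<close> by (simp add: mult.left_commute)
    qed
  qed (simp add: mult.commute)
  show ?thesis
  proof (induction j)
    case (Suc j)
    have "\<nu> 1 ^ Suc j * \<nu> 0 \<le> \<nu> 1 * (\<nu> 0 ^ j * \<nu> j)"
      using Suc.IH nonneg by (simp add: mult_left_mono mult.assoc)
    also have "\<dots> = \<nu> 0 ^ j * (\<nu> 1 * \<nu> j)" by (simp add: mult_ac)
    also have "\<dots> \<le> \<nu> 0 ^ j * (\<nu> 0 * \<nu> (Suc j))"
      using ratio[of j] nonneg by (simp add: mult_left_mono)
    finally show ?case by (simp add: mult_ac)
  qed simp
qed

lemma log_convex_seq_le_powr:
  fixes \<nu> :: "nat \<Rightarrow> real" and k :: nat
  assumes nonneg: "\<And>j. 0 \<le> \<nu> j"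
    and log_convex: "\<And>j. (\<nu> (Suc j))\<^sup>2 \<le> \<nu> j * \<nu> (Suc (Suc j))"
    and "0 < k" and first: "(\<nu> 0)\<^sup>2 \<le> \<nu> 1" and last: "\<nu> k \<le> \<nu> 0 * c"
  shows "\<nu> 0 \<le> c powr (1 / k)"
proof (cases "\<nu> 0 = 0")
  case False
  then have "0 < \<nu> 0" using nonneg[of 0] by simp
  have "\<nu> 0 ^ k * (\<nu> 0 ^ k * \<nu> 0) = ((\<nu> 0)\<^sup>2) ^ k * \<nu> 0"
    by (simp add: power_mult_distrib power2_eq_square)
  also have "\<dots> \<le> \<nu> 1 ^ k * \<nu> 0"
    using first \<open>0 < \<nu> 0\<close> by (simp add: power_mono)
  also have "\<dots> \<le> \<nu> 0 ^ k * \<nu> k" by (intro log_convex_seq_power_le nonneg log_convex)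
  also have "\<dots> \<le> \<nu> 0 ^ k * (\<nu> 0 * c)" using last nonneg by (simp add: mult_left_mono)
  finally have "\<nu> 0 ^ k \<le> c" using \<open>0 < \<nu> 0\<close> by (simp add: mult.commute)
  then have "(\<nu> 0 ^ k) powr (1 / k) \<le> c powr (1 / k)"
    using \<open>0 < \<nu> 0\<close> by (intro powr_mono2) simp_all
  then show ?thesis
    using \<open>0 < \<nu> 0\<close> \<open>0 < k\<close> by (simp add: powr_realpow[symmetric] powr_powr)
qed simp

text \<open>The norm of the j-th vector of w, M^T w, M M^T w, M^T M M^T w, \<dots>\<close>

definition krylov_norm :: "nat \<Rightarrow> nat \<Rightarrow> rmat \<Rightarrow> (nat \<Rightarrow> real) \<Rightarrow> nat \<Rightarrow> real" where
  "krylov_norm m n M w j =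
    (let v = mvmul m (mpow m (mmul n M (mtrans M)) (j div 2)) w
     in if even j then vnorm m v else vnorm n (mvmul m (mtrans M) v))"

lemma krylov_norm_log_convex:
  "(krylov_norm m n M w (Suc j))\<^sup>2 \<le> krylov_norm m n M w j * krylov_norm m n M w (Suc (Suc j))"
proof -
  define P where "P i = mvmul m (mpow m (mmul n M (mtrans M)) i) w" for i
  have P_Suc: "P (Suc i) = mvmul n M (mvmul m (mtrans M) (P i))" for i
    by (simp add: P_def mpow_Suc mvmul_mmul)
  show ?thesis
  proof (cases "even j")
    case True
    then show ?thesis
      using vnorm_mvmul_sq_le[where A = "mtrans M" and v = "P (j div 2)"]
      by (simp add: krylov_norm_def P_Suc flip: P_def)
  next
    case False
    then show ?thesis
      using vnorm_mvmul_sq_le[where A = M and v = "mvmul m (mtrans M) (P (j div 2))"]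
      by (simp add: krylov_norm_def P_Suc flip: P_def)
  qed
qed

lemma snorm_orth_proj_mmul_le_powr:
  assumes M: "is_rmat m n M" and E: "orth_proj m E"
  shows "snorm m n (mmul m E M)
    \<le> snorm m n (mmul m E (mmul m (mpow m (mmul n M (mtrans M)) q) M)) powr (1 / real (2 * q + 1))"
proof -
  define A where "A = mmul n M (mtrans M)"
  define c where "c = snorm m n (mmul m E (mmul m (mpow m A q) M))"
  have "vnorm m (mvmul n (mmul m E M) y) \<le> c powr (1 / real (2 * q + 1))"
    if y: "vnorm n y \<le> 1" for y
  proof -
    define w where "w = mvmul m E (mvmul n M y)"
    define \<nu> where "\<nu> = krylov_norm m n M w"
    have "is_rmat m n (mmul m E M)"
      using E M by (intro is_rmat_mmul) (simp_all add: orth_proj_def)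
    then have "mvmul m (mpow m A 0) w = w"
      unfolding w_def mpow_0 mvmul_mmul[symmetric] by (simp add: mmul_idmat_left)
    then have \<nu>_0: "\<nu> 0 = vnorm m w" and \<nu>_1: "\<nu> 1 = vnorm n (mvmul m (mtrans M) w)"
      by (simp_all add: \<nu>_def krylov_norm_def flip: A_def)
    have first: "(\<nu> 0)\<^sup>2 \<le> \<nu> 1"
      unfolding \<nu>_0 \<nu>_1 w_def
      by (rule order_trans[OF vnorm_orth_proj_mvmul_sq_le[OF E]
            mult_left_le_one_le[OF L2_set_nonneg L2_set_nonneg y]])
    have "mtrans (mpow m A q) = mpow m A q"
      unfolding A_def using M
      by (intro mtrans_mpow is_rmat_mmul is_rmat_mtrans) (simp_all add: mtrans_mmul)
    then have "vnorm n (mvmul m (mtrans M) (mvmul m (mpow m A q) w)) \<le> vnorm m w * c"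
      unfolding w_def c_def by (rule vnorm_mtrans_sym_orth_proj_le[OF E])
    then have last: "\<nu> (Suc (2 * q)) \<le> \<nu> 0 * c"
      unfolding \<nu>_0 by (simp add: \<nu>_def krylov_norm_def flip: A_def)
    have "\<nu> 0 \<le> c powr (1 / Suc (2 * q))"
      using first last krylov_norm_log_convex
      by (intro log_convex_seq_le_powr) (simp_all add: \<nu>_def krylov_norm_def Let_def)
    then show ?thesis
      by (simp add: \<nu>_0 w_def mvmul_mmul)
  qed
  then show ?thesis unfolding c_def A_def by (rule snorm_least)
qed

lemma tnorm_orth_proj_le_powr:
  assumes orth: "teq m m n3 (tprod m n1 n3 (ttrans n3 Q) Q) (tid m)"
  defines "E \<equiv> tsub (tid n1) (tprod n1 m n3 Q (ttrans n3 Q))"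
  shows "tnorm n1 n2 n3 (tprod n1 n1 n3 E X)
    \<le> tnorm n1 n2 n3 (tprod n1 n1 n3 E
        (tprod n1 n1 n3 (tpow n1 n3 (tprod n1 n2 n3 X (ttrans n3 X)) q) X)) powr (1 / real (2 * q + 1))"
proof -
  have "mmul (n1 * n3) (mtrans (bcirc n1 m n3 Q)) (bcirc n1 m n3 Q) = idmat (m * n3)"
    using bcirc_teq[OF orth] by (simp add: bcirc_tprod bcirc_ttrans bcirc_tid)
  then have "orth_proj (n1 * n3) (bcirc n1 n1 n3 E)"
    unfolding E_def bcirc_tsub bcirc_tprod bcirc_ttrans bcirc_tid
    by (intro orth_proj_complement is_rmat_bcirc)
  then show ?thesis
    unfolding tnorm_def bcirc_tprod bcirc_ttrans bcirc_tpow
    by (intro snorm_orth_proj_mmul_le_powr is_rmat_bcirc)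
qed

theorem theorem1:
  fixes n1 n2 n3 s m q :: nat and X B Q R :: tensor
  assumes "0 < n1" and "0 < n2" and "0 < n3" and "0 < s" and "0 < m"
  defines "XXt \<equiv> tprod n1 n2 n3 X (ttrans n3 X)"
  defines "K \<equiv> tcat s (\<lambda>j. tprod n1 n2 n3 (tprod n1 n1 n3 (tpow n1 n3 XXt j) X) B)"
  assumes QR: "teq n1 (s * (q + 1)) n3 K (tprod n1 m n3 Q R)"
      and orth: "teq m m n3 (tprod m n1 n3 (ttrans n3 Q) Q) (tid m)"
      and upper: "\<forall>k<n3. \<forall>i<m. \<forall>j<s * (q + 1). j < i \<longrightarrow> R i j k = 0"
  defines "P \<equiv> tprod n1 m n3 Q (ttrans n3 Q)"
  defines "Z \<equiv> tcat n2 (\<lambda>j. tprod n1 n1 n3 (tpow n1 n3 XXt j) X)"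
  shows "tnorm n1 n2 n3 (tprod n1 n1 n3 (tsub (tid n1) (tprod n1 m n3 Q (ttrans n3 Q))) X)
         \<le> tnorm n1 (n2 * (q + 1)) n3 (tprod n1 n1 n3 (tsub (tid n1) P) Z) powr (1 / (2 * q + 1))"
proof -
  define Zq where "Zq = tprod n1 n1 n3 (tsub (tid n1) P) (tprod n1 n1 n3 (tpow n1 n3 XXt q) X)"
  have "tnorm n1 n2 n3 Zq \<le> tnorm n1 (n2 * (q + 1)) n3 (tprod n1 n1 n3 (tsub (tid n1) P) Z)"
    unfolding Zq_def Z_def tprod_tcat using \<open>0 < n2\<close> by (intro tnorm_tcat_ge) simp_all
  then have "tnorm n1 n2 n3 Zq powr (1 / (2 * q + 1))
      \<le> tnorm n1 (n2 * (q + 1)) n3 (tprod n1 n1 n3 (tsub (tid n1) P) Z) powr (1 / (2 * q + 1))"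
    by (intro powr_mono2) (simp_all add: tnorm_def snorm_nonneg)
  with tnorm_orth_proj_le_powr[OF orth] show ?thesis
    unfolding Zq_def P_def XXt_def by (rule order_trans)
qed

end
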